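(* Let $E \to M$ be a smooth vector bundle over a smooth manifold $M$, and let $[\,\cdot,\cdot\,]:\Gamma(E)\times\Gamma(E)\to\Gamma(E)$ be an $\mathbb{R}$-bilinear bracket on the space $\Gamma(E)$ of smooth sections satisfying $$[X,[Y,Z]] = [[X,Y],Z] + [Y,[X,Z]] \quad \text{for all } X,Y,Z\in\Gamma(E).$$ Let $\mathcal{T}$ denote the set of all maps (not necessarily linear) $C^\infty(M)\to C^\infty(M)$, and suppose there is a map $\mathfrak{a}:\Gamma(E)\to\mathcal{T}$ such that $$(\mathfrak{a}(X)f)\,Y = [X,fY] - f[X,Y] \quad\text{for all } f\in C^\infty(M),\ X,Y\in\Gamma(E).$$ Then: (1) $\mathfrak{a}([X,Y]) = [\mathfrak{a}(X),\mathfrak{a}(Y)]_c$ for all $X,Y\in\Gamma(E)$, where for $T,S\in\mathcal{T}$ the commutator is defined by $[T,S]_c\,g = T(Sg) - S(Tg)$ for all $g\in C^\infty(M)$; (2) if $\mathfrak{a}$ is a linear map, then $\mathfrak{a}([X,Y]) = -\mathfrak{a}([Y,X])$ for all $X,Y\in\Gamma(E)$; (3) for each $X\in\Gamma(E)$, $\mathfrak{a}(X)(fg) = f\,(\mathfrak{a}(X)g) + (\mathfrak{a}(X)f)\,g$ for all $f,g\in C^\infty(M)$; consequently, if $\mathfrak{a}(X)$ is linear then it is a derivation of $C^\infty(M)$.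
   Context: $\Gamma(E)$ is regarded as a module over $C^\infty(M)$; it is faithful, i.e. for $h\in C^\infty(M)$, $hY=0$ for all $Y\in\Gamma(E)$ implies $h=0$. A derivation of $C^\infty(M)$ is an $\mathbb{R}$-linear map $D:C^\infty(M)\to C^\infty(M)$ with $D(fg)=fD(g)+D(f)g$. *)

theory Defs
  imports Complex_Main
begin

text \<open>Abstract algebraic setting: the type 'r plays the role of C^\<infinity>(M), a commutative
  unital real algebra; the type 'v plays the role of the space of sections \<Gamma>(E),
  a real vector space which is a faithful module over 'r via sm, compatibly with
  the real scalar multiplication.\<close>

definition faithful_module :: "('r::{comm_ring_1,real_algebra_1} \<Rightarrow> 'v::real_vector \<Rightarrow> 'v) \<Rightarrow> bool" where
  "faithful_module sm \<longleftrightarrow> module sm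
     \<and> (\<forall>c Y. sm (of_real c) Y = c *\<^sub>R Y)
     \<and> (\<forall>h. (\<forall>Y. sm h Y = 0) \<longrightarrow> h = 0)"

definition commutator :: "('r \<Rightarrow> 'r) \<Rightarrow> ('r \<Rightarrow> 'r) \<Rightarrow> ('r::ab_group_add \<Rightarrow> 'r)" where
  "commutator T S = (\<lambda>g. T (S g) - S (T g))"

definition linear_to_maps :: "('v::real_vector \<Rightarrow> ('r::real_vector \<Rightarrow> 'r)) \<Rightarrow> bool" where
  "linear_to_maps a \<longleftrightarrow> (\<forall>X Y. a (X + Y) = (\<lambda>f. a X f + a Y f))
     \<and> (\<forall>c X. a (c *\<^sub>R X) = (\<lambda>f. c *\<^sub>R a X f))"

definition derivation :: "('r::{comm_ring_1,real_algebra_1} \<Rightarrow> 'r) \<Rightarrow> bool" where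
  "derivation D \<longleftrightarrow> linear D \<and> (\<forall>f g. D (f * g) = f * D g + D f * g)"

end

theory Submission
  imports Defs
begin

text \<open>Every identity about the anchor is checked after applying both sides to an arbitrary
  section Y: by faithfulness it suffices to compare the resulting sections, and these are
  expressed through the bracket by the anchor identity. The Jacobi-type identity of the bracket
  then gives the homomorphism property, and expanding [X, (f g) Y] in two ways gives the
  Leibniz rule. Antisymmetry is immediate from the homomorphism property, since a commutator
  is antisymmetric.\<close>

lemma faithful_module_eqI:
  assumes "faithful_module sm" and "\<And>Y. sm h1 Y = sm h2 Y"
  shows "h1 = h2"
proof -
  interpret module sm using assms(1) unfolding faithful_module_def by blast
  have "\<forall>Y. sm (h1 - h2) Y = 0"
    by (simp add: scale_left_diff_distrib assms(2))
  then have "h1 - h2 = 0"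
    using assms(1) unfolding faithful_module_def by blast
  then show ?thesis by simp
qed

lemma commutator_antisym: "commutator T S = (\<lambda>g. - commutator S T g)"
  by (simp add: commutator_def)

lemma anchor_bracket_eq_commutator:
  assumes fm: "faithful_module sm"
    and lin: "\<And>X. linear (br X)"
    and leib: "\<And>X Y Z. br X (br Y Z) = br (br X Y) Z + br Y (br X Z)"
    and anch: "\<And>f X Y. sm (a X f) Y = br X (sm f Y) - sm f (br X Y)"
  shows "a (br X Y) = commutator (a X) (a Y)"
proof
  interpret module sm using fm unfolding faithful_module_def by blast
  fix f
  have br_diff: "br X (u - v) = br X u - br X v" for X u v
    using linear_diff[OF lin] .
  have jacobi: "br (br X Y) W = br X (br Y W) - br Y (br X W)" for W
    using leib[of X Y W] by (simp add: algebra_simps)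
  show "a (br X Y) f = commutator (a X) (a Y) f"
  proof (rule faithful_module_eqI[OF fm])
    fix Z
    show "sm (a (br X Y) f) Z = sm (commutator (a X) (a Y) f) Z"
      unfolding commutator_def
      by (simp only: scale_left_diff_distrib anch jacobi br_diff) (simp add: algebra_simps)
  qed
qed

lemma anchor_mult:
  assumes fm: "faithful_module sm"
    and anch: "\<And>f X Y. sm (a X f) Y = br X (sm f Y) - sm f (br X Y)"
  shows "a X (f * g) = f * a X g + a X f * g"
proof (rule faithful_module_eqI[OF fm])
  interpret module sm using fm unfolding faithful_module_def by blast
  fix Y
  have left: "sm (f * a X g) Y = sm f (br X (sm g Y)) - sm f (sm g (br X Y))"
    by (subst scale_scale[symmetric]) (simp only: anch scale_right_diff_distrib)
  have right: "sm (a X f * g) Y = br X (sm f (sm g Y)) - sm f (br X (sm g Y))"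
    by (subst scale_scale[symmetric]) (simp only: anch)
  have prod: "sm (a X (f * g)) Y = br X (sm f (sm g Y)) - sm f (sm g (br X Y))"
    by (simp only: anch scale_scale)
  show "sm (a X (f * g)) Y = sm (f * a X g + a X f * g) Y"
    by (simp only: scale_left_distrib left right prod) (simp add: algebra_simps)
qed

theorem proposition1:
  fixes sm :: "'r::{comm_ring_1,real_algebra_1} \<Rightarrow> 'v::real_vector \<Rightarrow> 'v"
    and br :: "'v \<Rightarrow> 'v \<Rightarrow> 'v"
    and a :: "'v \<Rightarrow> 'r \<Rightarrow> 'r"
  assumes fm: "faithful_module sm"
    and bil1: "\<And>Z. linear (\<lambda>Y. br Y Z)"
    and bil2: "\<And>Y. linear (\<lambda>Z. br Y Z)"
    and leib: "\<And>X Y Z. br X (br Y Z) = br (br X Y) Z + br Y (br X Z)"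
    and anch: "\<And>f X Y. sm (a X f) Y = br X (sm f Y) - sm f (br X Y)"
  shows "(\<forall>X Y. a (br X Y) = commutator (a X) (a Y))
       \<and> (linear_to_maps a \<longrightarrow> (\<forall>X Y. a (br X Y) = (\<lambda>f. - a (br Y X) f)))
       \<and> (\<forall>X. (\<forall>f g. a X (f * g) = f * a X g + a X f * g)
              \<and> (linear (a X) \<longrightarrow> derivation (a X)))"
proof -
  have hom: "a (br X Y) = commutator (a X) (a Y)" for X Y
    using anchor_bracket_eq_commutator[OF fm bil2 leib anch] .
  have antisym: "a (br X Y) = (\<lambda>f. - a (br Y X) f)" for X Y
    unfolding hom by (rule commutator_antisym)
  have mult: "a X (f * g) = f * a X g + a X f * g" for X f g
    using anchor_mult[OF fm anch] .
  show ?thesis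
    unfolding derivation_def using hom antisym mult by blast
qed

end
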